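(* Let $m,n$ be positive integers and $\lambda,\mu,\nu$ partitions of $N$ with $\ell(\lambda)\le mn$, $\ell(\mu)\le m$, $\ell(\nu)\le n$. With $c_1=(m^2-1)(n-1)-1$, $c_2=(m-1)(n-1)^2-1$, $c_3=\binom{m-1}{2}(n-1)+(m-1)-1$, $f_1(i)=2\binom{n-1}{2}(i-2)-1$, $f_2(j)=(n-j-1)(m-1)-1$, $$\tilde g^{m,n}_{\lambda,\mu,\nu}\le\binom{N+c_1}{N}\binom{2N+c_2}{2N}\binom{(2m-1)N+c_3}{(2m-1)N}\prod_{i=3}^{m}\binom{2N+f_1(i)}{2N}\prod_{j=1}^{n-3}\binom{(2m-1)N+f_2(j)}{(2m-1)N}.$$
   Context: Partitions are padded with zeros: $\lambda=(\lambda_1,\dots,\lambda_{mn})$, $\mu=(\mu_1,\dots,\mu_m)$, $\nu=(\nu_1,\dots,\nu_n)$. Vector partition function: for a $d\times r$ integer matrix $A$ with $\ker A\cap\mathbb R^r_{\ge0}=\{0\}$, $p_A(\mathbf b)=\#\{\mathbf x\in\mathbb Z^r_{\ge0}:A\mathbf x=\mathbf b\}$ for $\mathbf b\in\mathbb Z^d$. Variables $s_0,\dots,s_{m-1},t_1,\dots,t_{n-2}$; $T=t_1\cdots t_{n-2}$; $x_i=s_1\cdots s_iT^i$ ($1\le i\le m-1$), $y_j=s_0s_1\cdots s_{m-1}T^{m-1}t_1\cdots t_{j-1}$ ($1\le j\le n-1$); $e(M)\in\mathbb Z^{m+n-2}$ the exponent vector of a Laurent monomial $M$, coordinates ordered $s_0,\dots,s_{m-1},t_1,\dots,t_{n-2}$.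 $A^{m,n}$ is the matrix whose columns are the exponent vectors of the monomials (with multiplicity): $y_j/x_i$ and $x_iy_j$; $x_i$ ($n-1$ times each); $y_j$ ($m-1$ times each); $x_iy_j/x_k$ ($i\ne k$); $x_iy_j/y_k$ ($j\ne k$); $x_ky_l/(x_iy_j)$ ($i<k$, $j\ne l$); $x_k/x_i$ ($i<k$, $n-1$ times each); $y_l/y_j$ ($j<l$, $m-1$ times each); indices $i,k\in\{1,\dots,m-1\}$, $j,l\in\{1,\dots,n-1\}$. With $(z_1,\dots,z_{mn})=(1,x_1,\dots,x_{m-1},y_1,\dots,y_{n-1},x_1y_1,\dots,x_1y_{n-1},x_2y_1,\dots,x_{m-1}y_{n-1})$, $\mathbf b^{m,n}(\lambda,\mu,\nu;Id)=e\big(\prod_{i=1}^{m-1}x_i^{\mu_{i+1}}\prod_{j=1}^{n-1}y_j^{\nu_{j+1}}\big)-e\big(\prod_{i=1}^{mn}z_i^{\lambda_i}\big)$ and $\tilde g^{m,n}_{\lambda,\mu,\nu}=p_{A^{m,n}}(\mathbf b^{m,n}(\lambda,\mu,\nu;Id))$. *)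

theory Defs
  imports Main
begin

text \<open>Exponent vectors of Laurent monomials in the variables
  s_0,...,s_{m-1}, t_1,...,t_{n-2} are functions nat => int:
  coordinate k (k < m) is the exponent of s_k, coordinate m + j - 1
  (1 <= j <= n-2) is the exponent of t_j; all other coordinates are 0.\<close>

definition eT :: "nat \<Rightarrow> nat \<Rightarrow> nat \<Rightarrow> int" where
  "eT m n c = (if m \<le> c \<and> c < m + (n - 2) then 1 else 0)"

text \<open>e(x_i), x_i = s_1 ... s_i T^i\<close>
definition ex :: "nat \<Rightarrow> nat \<Rightarrow> nat \<Rightarrow> nat \<Rightarrow> int" where
  "ex m n i c = (if 1 \<le> c \<and> c \<le> i then 1 else 0) + int i * eT m n c"

text \<open>e(y_j), y_j = s_0 s_1 ... s_{m-1} T^{m-1} t_1 ... t_{j-1}\<close>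
definition ey :: "nat \<Rightarrow> nat \<Rightarrow> nat \<Rightarrow> nat \<Rightarrow> int" where
  "ey m n j c = (if c < m then 1 else 0) + int (m - 1) * eT m n c
               + (if m \<le> c \<and> c < m + (j - 1) then 1 else 0)"

definition colsA :: "nat \<Rightarrow> nat \<Rightarrow> (nat \<Rightarrow> int) list" where
  "colsA m n =
     [(\<lambda>c. ey m n j c - ex m n i c). i \<leftarrow> [1..<m], j \<leftarrow> [1..<n]]
   @ [(\<lambda>c. ex m n i c + ey m n j c). i \<leftarrow> [1..<m], j \<leftarrow> [1..<n]]
   @ concat [replicate (n - 1) (ex m n i). i \<leftarrow> [1..<m]]
   @ concat [replicate (m - 1) (ey m n j). j \<leftarrow> [1..<n]]
   @ [(\<lambda>c. ex m n i c + ey m n j c - ex m n k c).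
        i \<leftarrow> [1..<m], k \<leftarrow> [1..<m], i \<noteq> k, j \<leftarrow> [1..<n]]
   @ [(\<lambda>c. ex m n i c + ey m n j c - ey m n k c).
        i \<leftarrow> [1..<m], j \<leftarrow> [1..<n], k \<leftarrow> [1..<n], j \<noteq> k]
   @ [(\<lambda>c. ex m n k c + ey m n l c - ex m n i c - ey m n j c).
        i \<leftarrow> [1..<m], k \<leftarrow> [1..<m], i < k, j \<leftarrow> [1..<n], l \<leftarrow> [1..<n], j \<noteq> l]
   @ concat [replicate (n - 1) (\<lambda>c. ex m n k c - ex m n i c).
        i \<leftarrow> [1..<m], k \<leftarrow> [1..<m], i < k]
   @ concat [replicate (m - 1) (\<lambda>c. ey m n l c - ey m n j c).
        j \<leftarrow> [1..<n], l \<leftarrow> [1..<n], j < l]"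

definition vpf :: "(nat \<Rightarrow> int) list \<Rightarrow> (nat \<Rightarrow> int) \<Rightarrow> nat" where
  "vpf cols b = card {x :: nat list. length x = length cols \<and>
      (\<forall>c. (\<Sum>k<length cols. int (x ! k) * (cols ! k) c) = b c)}"

text \<open>e(z_k) for z = (1, x_1..x_{m-1}, y_1..y_{n-1}, x_1y_1,..,x_1y_{n-1}, x_2y_1, .., x_{m-1}y_{n-1})\<close>
definition ez :: "nat \<Rightarrow> nat \<Rightarrow> nat \<Rightarrow> nat \<Rightarrow> int" where
  "ez m n k c =
     (if k \<le> 1 then 0
      else if k \<le> m then ex m n (k - 1) c
      else if k \<le> m + n - 1 then ey m n (k - m) c
      else ex m n ((k - (m + n)) div (n - 1) + 1) c
         + ey m n ((k - (m + n)) mod (n - 1) + 1) c)"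

text \<open>b^{m,n}(lambda,mu,nu;Id); partitions are functions indexed from 1.\<close>
definition bvec :: "nat \<Rightarrow> nat \<Rightarrow> (nat \<Rightarrow> nat) \<Rightarrow> (nat \<Rightarrow> nat) \<Rightarrow> (nat \<Rightarrow> nat) \<Rightarrow> nat \<Rightarrow> int" where
  "bvec m n lam mu nu c =
     (\<Sum>i=1..m-1. int (mu (i + 1)) * ex m n i c)
   + (\<Sum>j=1..n-1. int (nu (j + 1)) * ey m n j c)
   - (\<Sum>k=1..m*n. int (lam k) * ez m n k c)"

definition gtilde :: "nat \<Rightarrow> nat \<Rightarrow> (nat \<Rightarrow> nat) \<Rightarrow> (nat \<Rightarrow> nat) \<Rightarrow> (nat \<Rightarrow> nat) \<Rightarrow> nat" where
  "gtilde m n lam mu nu = vpf (colsA m n) (bvec m n lam mu nu)"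

definition partition_len :: "(nat \<Rightarrow> nat) \<Rightarrow> nat \<Rightarrow> nat \<Rightarrow> bool" where
  "partition_len p N L \<longleftrightarrow>
     (\<forall>i\<ge>1. p (Suc i) \<le> p i) \<and> (\<forall>i>L. p i = 0) \<and> (\<Sum>i=1..L. p i) = N"

end

theory Submission
  imports Defs "HOL-Combinatorics.Permutations"
begin

text \<open>All columns of A^{m,n} are nonnegative, and so are all e(z_k), so the lambda-part of
  b = b^{m,n}(lambda, mu, nu; Id) only decreases b: its coordinate at s_0 is at most N, at
  s_1, ..., s_{m-1} at most 2N and at t_1, ..., t_{n-2} at most (2m-1)N. For m >= 2 and n >= 3 the
  columns are split into blocks, one per coordinate c, such that every column of block c has
  entry at least 1 at c and each block contains a pivot column that vanishes at all earlier
  coordinates and is nonzero at c. In a solution x of A x = b the multiplicities of the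
  non-pivot columns of block c therefore sum to at most b_c, which leaves binomial(b_c + L, b_c)
  possibilities for a block of L + 1 columns; once they are fixed, the triangular pivot columns
  determine their own multiplicities. For n = 2 there are no t-coordinates, and the columns
  x_i and x_k/x_i form a single block measured on s_1, ..., s_{m-1}.\<close>

definition lincomb :: "nat list \<Rightarrow> (nat \<Rightarrow> int) list \<Rightarrow> nat \<Rightarrow> int" where
  "lincomb x cols c = (\<Sum>(a, v)\<leftarrow>zip x cols. int a * v c)"

definition solutions :: "(nat \<Rightarrow> int) list \<Rightarrow> (nat \<Rightarrow> int) \<Rightarrow> nat list set" where
  "solutions cols b = {x. length x = length cols \<and> (\<forall>c. lincomb x cols c = b c)}"

lemma lincomb_conv_sum:
  assumes "length x = length cols"
  shows "lincomb x cols c = (\<Sum>k<length cols. int (x ! k) * (cols ! k) c)"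
  using assms unfolding lincomb_def
  by (simp add: sum_list_sum_nth atLeast0LessThan case_prod_unfold)

lemma vpf_eq_card_solutions: "vpf cols b = card (solutions cols b)"
  unfolding vpf_def solutions_def
  by (rule arg_cong[where f = card]) (auto simp: lincomb_conv_sum)

lemma lincomb_append:
  "length x = length cols \<Longrightarrow> lincomb (x @ y) (cols @ cols') c = lincomb x cols c + lincomb y cols' c"
  by (simp add: lincomb_def)

lemma lincomb_nonneg: "(\<And>v. v \<in> set cols \<Longrightarrow> 0 \<le> v c) \<Longrightarrow> 0 \<le> lincomb x cols c"
  unfolding lincomb_def by (auto intro!: sum_list_nonneg dest!: set_zip_rightD)

lemma sum_lincomb:
  "(\<Sum>c\<in>C. lincomb x cols c) = (\<Sum>(a, v)\<leftarrow>zip x cols. int a * (\<Sum>c\<in>C. v c))"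
  unfolding lincomb_def
  by (induction x cols rule: list_induct2') (simp_all add: sum.distrib sum_distrib_left)

lemma sum_list_le_sum_lincomb:
  assumes "length y = length cols" and "\<And>v. v \<in> set cols \<Longrightarrow> 1 \<le> (\<Sum>c\<in>C. v c)"
  shows "int (sum_list y) \<le> (\<Sum>c\<in>C. lincomb y cols c)"
  using assms unfolding sum_lincomb
proof (induction y cols rule: list_induct2)
  case (Cons a y v cols)
  have "int a \<le> int a * (\<Sum>c\<in>C. v c)"
    using Cons.prems[of v] by (simp add: mult_le_cancel_left1)
  with Cons show ?case by simp
qed simp

lemma vpf_permute_list:
  assumes p: "p permutes {..<length cols}"
  shows "vpf (permute_list p cols) b = vpf cols b"
proof -
  let ?S = "\<lambda>cols. {x. length x = length cols \<and>
              (\<forall>c. (\<Sum>k<length cols. int (x ! k) * (cols ! k) c) = b c)}"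
  have comb: "(\<Sum>k<length cols. int (permute_list p x ! k) * (permute_list p cols ! k) c)
      = (\<Sum>k<length cols. int (x ! k) * (cols ! k) c)" if "length x = length cols" for x c
  proof -
    have "(\<Sum>k<length cols. int (x ! k) * (cols ! k) c)
        = (\<Sum>k<length cols. int (x ! p k) * (cols ! p k) c)"
      by (subst sum.permute[OF p]) (simp add: comp_def)
    then show ?thesis using p that by (simp add: permute_list_nth)
  qed
  have inv: "permute_list p (permute_list (inv p) y) = y" if "length y = length cols" for y
    using p that
    by (metis permute_list_compose permutes_inv permutes_inv_o(2) permute_list_id)
  have mem_iff: "permute_list p x \<in> ?S (permute_list p cols) \<longleftrightarrow> x \<in> ?S cols"
    if "length x = length cols" for x
    using comb[OF that] that by simp
  have "?S (permute_list p cols) = permute_list p ` ?S cols"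
  proof (intro equalityI subsetI)
    fix y assume y: "y \<in> ?S (permute_list p cols)"
    define x where "x = permute_list (inv p) y"
    have len: "length x = length cols" using y by (simp add: x_def)
    have y_eq: "y = permute_list p x" using inv[of y] y by (simp add: x_def)
    have "permute_list p x \<in> ?S (permute_list p cols)"
      unfolding y_eq[symmetric] by (rule y)
    then have "x \<in> ?S cols" using mem_iff[OF len] by blast
    then show "y \<in> permute_list p ` ?S cols" unfolding y_eq by (rule imageI)
  next
    fix y assume "y \<in> permute_list p ` ?S cols"
    then show "y \<in> ?S (permute_list p cols)" using mem_iff by auto
  qed
  moreover have "inj_on (permute_list p) (?S cols)"
    by (rule inj_on_inverseI[where g = "permute_list (inv p)"])
       (use p in \<open>auto simp: permute_list_compose[symmetric] permutes_inv permutes_inv_o(1)\<close>)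
  ultimately show ?thesis
    unfolding vpf_def by (simp add: card_image)
qed

lemma vpf_mset_eq: "mset cols = mset cols' \<Longrightarrow> vpf cols b = vpf cols' b"
  by (metis mset_eq_permutation vpf_permute_list)

lemma lists_sum_le_bij:
  "bij_betw (\<lambda>y. y @ [B - sum_list y]) {y :: nat list. length y = L \<and> sum_list y \<le> B}
     {l. length l = L + 1 \<and> sum_list l = B}"
proof (rule bij_betw_byWitness[where f' = butlast])
  show "(\<lambda>y. y @ [B - sum_list y]) ` {y. length y = L \<and> sum_list y \<le> B}
      \<subseteq> {l. length l = L + 1 \<and> sum_list l = B}" by auto
  show "butlast ` {l. length l = L + 1 \<and> sum_list l = B} \<subseteq> {y. length y = L \<and> sum_list y \<le> B}"
  proof safe
    fix l :: "nat list" assume "length l = L + 1"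
    then show "sum_list (butlast l) \<le> sum_list l"
      by (metis append_butlast_last_id le_add1 list.size(3) sum_list_append Zero_neq_Suc Suc_eq_plus1)
  qed simp
  show "\<forall>l\<in>{l. length l = L + 1 \<and> sum_list l = B}. butlast l @ [B - sum_list (butlast l)] = l"
  proof safe
    fix l :: "nat list" assume "length l = L + 1"
    then have "l = butlast l @ [last l]"
      by (metis append_butlast_last_id list.size(3) Zero_neq_Suc Suc_eq_plus1)
    then have "sum_list l - sum_list (butlast l) = last l"
      by (metis diff_add_inverse sum_list_append sum_list_simps add_0_right)
    then show "butlast l @ [sum_list l - sum_list (butlast l)] = l"
      using \<open>l = butlast l @ [last l]\<close> by simp
  qed
qed simp

lemma card_lists_sum_le: "card {y :: nat list. length y = L \<and> sum_list y \<le> B} = (B + L) choose B"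
  using bij_betw_same_card[OF lists_sum_le_bij] card_length_sum_list[of "L + 1" B] by simp

lemma finite_lists_sum_le: "finite {y :: nat list. length y = L \<and> sum_list y \<le> B}"
  by (rule card_ge_0_finite) (simp add: card_lists_sum_le)

lemma triangular_solutions_subsingleton:
  assumes pivot: "\<And>g. g < length Ds \<Longrightarrow> (Ds ! g) (P g) \<noteq> 0"
    and triangular: "\<And>g h. g < h \<Longrightarrow> h < length Ds \<Longrightarrow> (Ds ! h) (P g) = 0"
    and x: "x \<in> solutions Ds b" and x': "x' \<in> solutions Ds b"
  shows "x = x'"
proof (rule nth_equalityI)
  have len: "length x = length Ds" "length x' = length Ds"
    using x x' by (auto simp: solutions_def)
  then show "length x = length x'" by simp
  show "x ! g = x' ! g" if "g < length x" for g
    using that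
  proof (induction g rule: less_induct)
    case (less g)
    let ?d = "\<lambda>h. (int (x ! h) - int (x' ! h)) * (Ds ! h) (P g)"
    have "(\<Sum>h\<in>{..<length Ds} - {g}. ?d h) = 0"
    proof (rule sum.neutral, intro ballI)
      fix h assume h: "h \<in> {..<length Ds} - {g}"
      then have "h < length Ds" "h \<noteq> g" by auto
      then consider "h < g" | "g < h" by linarith
      then show "?d h = 0"
      proof cases
        case 1
        then have "x ! h = x' ! h" using less.IH \<open>h < length Ds\<close> len by simp
        then show ?thesis by simp
      next
        case 2
        then show ?thesis using triangular \<open>h < length Ds\<close> by simp
      qed
    qed
    then have "?d g = (\<Sum>h<length Ds. ?d h)"
      using sum.remove[of "{..<length Ds}" g ?d] less.prems len by simp
    also have "\<dots> = 0"
      using x x' len by (simp add: solutions_def lincomb_conv_sum left_diff_distrib sum_subtractf)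
    finally show ?case using pivot[of g] less.prems len by simp
  qed
qed

lemma triangular_solutions_card:
  assumes "\<And>g. g < length Ds \<Longrightarrow> (Ds ! g) (P g) \<noteq> 0"
    and "\<And>g h. g < h \<Longrightarrow> h < length Ds \<Longrightarrow> (Ds ! h) (P g) = 0"
  shows "finite (solutions Ds b) \<and> card (solutions Ds b) \<le> 1"
proof (cases "solutions Ds b = {}")
  case False
  then obtain x where "x \<in> solutions Ds b" by blast
  then have sub: "solutions Ds b \<subseteq> {x}"
    using triangular_solutions_subsingleton[OF assms] by blast
  show ?thesis using card_mono[OF _ sub] finite_subset[OF sub] by simp
qed simp

lemma solutions_append_subset:
  fixes R cols :: "(nat \<Rightarrow> int) list"
  assumes cover: "\<And>v. v \<in> set R \<Longrightarrow> 1 \<le> (\<Sum>c\<in>C. v c)"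
    and nonneg: "\<And>v c. v \<in> set cols \<Longrightarrow> 0 \<le> v c"
    and bound: "(\<Sum>c\<in>C. b c) \<le> int B"
  shows "solutions (R @ cols) b \<subseteq> (\<Union>y\<in>{y. length y = length R \<and> sum_list y \<le> B}.
    (@) y ` solutions cols (\<lambda>c. b c - lincomb y R c))"
proof
  fix x assume x: "x \<in> solutions (R @ cols) b"
  define y where "y = take (length R) x"
  define z where "z = drop (length R) x"
  have y_len: "length y = length R" and z_len: "length z = length cols"
    using x by (auto simp: solutions_def y_def z_def)
  have split: "b c = lincomb y R c + lincomb z cols c" for c
    using x lincomb_append[OF y_len, of z cols c]
    by (simp add: solutions_def y_def z_def)
  have "int (sum_list y) \<le> (\<Sum>c\<in>C. lincomb y R c)"
    by (rule sum_list_le_sum_lincomb[OF y_len cover])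
  also have "\<dots> \<le> (\<Sum>c\<in>C. b c)"
    by (rule sum_mono) (simp add: split lincomb_nonneg nonneg)
  finally have "sum_list y \<le> B" using bound by simp
  moreover have "z \<in> solutions cols (\<lambda>c. b c - lincomb y R c)"
    using z_len split by (simp add: solutions_def)
  moreover have "x = y @ z" by (simp add: y_def z_def)
  ultimately show "x \<in> (\<Union>y\<in>{y. length y = length R \<and> sum_list y \<le> B}.
      (@) y ` solutions cols (\<lambda>c. b c - lincomb y R c))"
    using y_len by blast
qed

lemma solutions_append_card:
  fixes R cols :: "(nat \<Rightarrow> int) list"
  assumes cover: "\<And>v. v \<in> set R \<Longrightarrow> 1 \<le> (\<Sum>c\<in>C. v c)"
    and nonneg: "\<And>v c. v \<in> set cols \<Longrightarrow> 0 \<le> v c"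
    and bound: "(\<Sum>c\<in>C. b c) \<le> int B"
    and fibres: "\<And>y. length y = length R \<Longrightarrow> sum_list y \<le> B \<Longrightarrow>
        finite (solutions cols (\<lambda>c. b c - lincomb y R c)) \<and>
        card (solutions cols (\<lambda>c. b c - lincomb y R c)) \<le> K"
  shows "finite (solutions (R @ cols) b) \<and>
    card (solutions (R @ cols) b) \<le> ((B + length R) choose B) * K"
proof -
  define Y where "Y = {y :: nat list. length y = length R \<and> sum_list y \<le> B}"
  define F where "F y = solutions cols (\<lambda>c. b c - lincomb y R c)" for y
  have sub: "solutions (R @ cols) b \<subseteq> (\<Union>y\<in>Y. (@) y ` F y)"
    unfolding Y_def F_def
    using solutions_append_subset[where R = R and cols = cols and B = B and C = C and b = b]
      cover nonneg bound by blast
  have fin_Y: "finite Y" unfolding Y_def by (rule finite_lists_sum_le)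
  have fibre: "finite (F y) \<and> card (F y) \<le> K" if "y \<in> Y" for y
    using fibres that by (simp add: F_def Y_def)
  have fin_U: "finite (\<Union>y\<in>Y. (@) y ` F y)" using fin_Y fibre by simp
  have "card (solutions (R @ cols) b) \<le> card (\<Union>y\<in>Y. (@) y ` F y)"
    by (rule card_mono[OF fin_U sub])
  also have "\<dots> \<le> (\<Sum>y\<in>Y. card ((@) y ` F y))" by (rule card_UN_le[OF fin_Y])
  also have "\<dots> \<le> (\<Sum>y\<in>Y. K)"
  proof (rule sum_mono)
    fix y assume "y \<in> Y"
    then show "card ((@) y ` F y) \<le> K" using fibre card_image_le le_trans by blast
  qed
  also have "\<dots> = ((B + length R) choose B) * K" by (simp add: Y_def card_lists_sum_le)
  finally show ?thesis using finite_subset[OF sub fin_U] by blast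
qed

lemma solutions_groups_card:
  fixes Ds :: "(nat \<Rightarrow> int) list" and groups :: "((nat \<Rightarrow> int) list \<times> nat set \<times> nat) list"
  assumes pivot: "\<And>g. g < length Ds \<Longrightarrow> (Ds ! g) (P g) \<noteq> 0"
    and triangular: "\<And>g h. g < h \<Longrightarrow> h < length Ds \<Longrightarrow> (Ds ! h) (P g) = 0"
    and nonneg: "\<And>v c. v \<in> set (concat (map fst groups) @ Ds) \<Longrightarrow> 0 \<le> v c"
    and groups: "\<And>R C B. (R, C, B) \<in> set groups \<Longrightarrow>
      (\<forall>v\<in>set R. 1 \<le> (\<Sum>c\<in>C. v c)) \<and> (\<Sum>c\<in>C. b c) \<le> int B"
  shows "finite (solutions (concat (map fst groups) @ Ds) b) \<and>
    card (solutions (concat (map fst groups) @ Ds) b) \<le> (\<Prod>(R, C, B)\<leftarrow>groups. (B + length R) choose B)"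
  using nonneg groups
proof (induction groups arbitrary: b)
  case Nil
  then show ?case using triangular_solutions_card[OF pivot triangular] by simp
next
  case (Cons group groups)
  obtain R C B where group: "group = (R, C, B)" by (cases group)
  have "finite (solutions (R @ concat (map fst groups) @ Ds) b) \<and>
    card (solutions (R @ concat (map fst groups) @ Ds) b)
      \<le> ((B + length R) choose B) * (\<Prod>(R, C, B)\<leftarrow>groups. (B + length R) choose B)"
  proof (rule solutions_append_card)
    show "\<And>v. v \<in> set R \<Longrightarrow> 1 \<le> (\<Sum>c\<in>C. v c)" "(\<Sum>c\<in>C. b c) \<le> int B"
      using Cons.prems(2)[of R C B] group by auto
    show "\<And>v c. v \<in> set (concat (map fst groups) @ Ds) \<Longrightarrow> 0 \<le> v c"
      using Cons.prems(1) by auto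
    fix y :: "nat list"
    have R_comb: "0 \<le> lincomb y R c" for c
      using Cons.prems(1) group by (intro lincomb_nonneg) auto
    show "finite (solutions (concat (map fst groups) @ Ds) (\<lambda>c. b c - lincomb y R c)) \<and>
      card (solutions (concat (map fst groups) @ Ds) (\<lambda>c. b c - lincomb y R c))
        \<le> (\<Prod>(R, C, B)\<leftarrow>groups. (B + length R) choose B)"
    proof (rule Cons.IH)
      show "\<And>v c. v \<in> set (concat (map fst groups) @ Ds) \<Longrightarrow> 0 \<le> v c"
        using Cons.prems(1) by auto
      fix R' C' B' assume "(R', C', B') \<in> set groups"
      moreover have "(\<Sum>c\<in>C'. b c - lincomb y R c) \<le> (\<Sum>c\<in>C'. b c)"
        by (rule sum_mono) (simp add: R_comb)
      ultimately show "(\<forall>v\<in>set R'. 1 \<le> (\<Sum>c\<in>C'. v c)) \<and>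
          (\<Sum>c\<in>C'. b c - lincomb y R c) \<le> int B'"
        using Cons.prems(2)[of R' C' B'] by fastforce
    qed
  qed
  then show ?case by (simp add: group)
qed

lemma mset_concat_remove1:
  assumes "\<And>g. g \<in> set gs \<Longrightarrow> D g \<in> set (G g)"
  shows "mset (concat (map G gs)) = mset (concat (map (\<lambda>g. remove1 (D g) (G g)) gs) @ map D gs)"
  using assms
proof (induction gs)
  case (Cons g gs)
  then have "mset (G g) = add_mset (D g) (mset (remove1 (D g) (G g)))" by simp
  with Cons show ?case by simp
qed simp

lemma vpf_le_prod_choose:
  fixes cols :: "(nat \<Rightarrow> int) list" and G :: "nat \<Rightarrow> (nat \<Rightarrow> int) list"
  assumes mset: "mset cols = mset (concat (map G [0..<r]))"
    and nonneg: "\<And>v c. v \<in> set cols \<Longrightarrow> 0 \<le> v c"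
    and pivot_mem: "\<And>g. g < r \<Longrightarrow> D g \<in> set (G g)"
    and pivot: "\<And>g. g < r \<Longrightarrow> D g (P g) \<noteq> 0"
    and triangular: "\<And>g h. g < h \<Longrightarrow> h < r \<Longrightarrow> D h (P g) = 0"
    and cover: "\<And>g v. g < r \<Longrightarrow> v \<in> set (G g) \<Longrightarrow> 1 \<le> (\<Sum>c\<in>C g. v c)"
    and bound: "\<And>g. g < r \<Longrightarrow> (\<Sum>c\<in>C g. b c) \<le> int (B g)"
  shows "vpf cols b \<le> (\<Prod>g<r. (B g + (length (G g) - 1)) choose B g)"
proof -
  define Ds where "Ds = map D [0..<r]"
  define groups where "groups = map (\<lambda>g. (remove1 (D g) (G g), C g, B g)) [0..<r]"
  have cols_eq: "mset cols = mset (concat (map fst groups) @ Ds)"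
    using mset mset_concat_remove1[of "[0..<r]" D G] pivot_mem
    by (simp add: Ds_def groups_def comp_def)
  have "vpf cols b = card (solutions (concat (map fst groups) @ Ds) b)"
    using vpf_mset_eq[OF cols_eq] by (simp add: vpf_eq_card_solutions)
  also have "\<dots> \<le> (\<Prod>(R, C, B)\<leftarrow>groups. (B + length R) choose B)"
  proof (rule conjunct2[OF solutions_groups_card])
    show "(Ds ! g) (P g) \<noteq> 0" if "g < length Ds" for g
      using pivot that by (simp add: Ds_def)
    show "(Ds ! h) (P g) = 0" if "g < h" "h < length Ds" for g h
      using triangular that by (simp add: Ds_def)
    show "0 \<le> v c" if "v \<in> set (concat (map fst groups) @ Ds)" for v c
      using nonneg that mset_eq_setD[OF cols_eq] by blast
    show "(\<forall>v\<in>set R. 1 \<le> (\<Sum>c\<in>C'. v c)) \<and> (\<Sum>c\<in>C'. b c) \<le> int B'"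
      if group: "(R, C', B') \<in> set groups" for R C' B'
    proof -
      obtain g where g: "g < r" "R = remove1 (D g) (G g)" "C' = C g" "B' = B g"
        using group by (auto simp: groups_def)
      moreover have "set R \<subseteq> set (G g)" using g(2) by (simp add: set_remove1_subset)
      ultimately show ?thesis
        using cover bound by auto
    qed
  qed
  also have "\<dots> = (\<Prod>g<r. (B g + length (remove1 (D g) (G g))) choose B g)"
    using prod.distinct_set_conv_list[of "[0..<r]" "\<lambda>g. (B g + length (remove1 (D g) (G g))) choose B g"]
    by (simp add: groups_def atLeast0LessThan comp_def)
  also have "\<dots> = (\<Prod>g<r. (B g + (length (G g) - 1)) choose B g)"
    by (rule prod.cong) (simp_all add: length_remove1 pivot_mem)
  finally show ?thesis .
qed

definition cols_y_div_x :: "nat \<Rightarrow> nat \<Rightarrow> (nat \<Rightarrow> int) list" where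
  "cols_y_div_x m n = [(\<lambda>c. ey m n j c - ex m n i c). i \<leftarrow> [1..<m], j \<leftarrow> [1..<n]]"

definition cols_xy :: "nat \<Rightarrow> nat \<Rightarrow> (nat \<Rightarrow> int) list" where
  "cols_xy m n = [(\<lambda>c. ex m n i c + ey m n j c). i \<leftarrow> [1..<m], j \<leftarrow> [1..<n]]"

definition cols_x :: "nat \<Rightarrow> nat \<Rightarrow> (nat \<Rightarrow> int) list" where
  "cols_x m n = concat [replicate (n - 1) (ex m n i). i \<leftarrow> [1..<m]]"

definition cols_y :: "nat \<Rightarrow> nat \<Rightarrow> (nat \<Rightarrow> int) list" where
  "cols_y m n = concat [replicate (m - 1) (ey m n j). j \<leftarrow> [1..<n]]"

definition cols_xy_div_x :: "nat \<Rightarrow> nat \<Rightarrow> (nat \<Rightarrow> int) list" where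
  "cols_xy_div_x m n = [(\<lambda>c. ex m n i c + ey m n j c - ex m n k c).
     i \<leftarrow> [1..<m], k \<leftarrow> [1..<m], i \<noteq> k, j \<leftarrow> [1..<n]]"

definition cols_xy_div_y :: "nat \<Rightarrow> nat \<Rightarrow> (nat \<Rightarrow> int) list" where
  "cols_xy_div_y m n = [(\<lambda>c. ex m n i c + ey m n j c - ey m n k c).
     i \<leftarrow> [1..<m], j \<leftarrow> [1..<n], k \<leftarrow> [1..<n], j \<noteq> k]"

definition cols_xy_div_xiy :: "nat \<Rightarrow> nat \<Rightarrow> nat \<Rightarrow> (nat \<Rightarrow> int) list" where
  "cols_xy_div_xiy m n i = [(\<lambda>c. ex m n k c + ey m n l c - ex m n i c - ey m n j c).
     k \<leftarrow> [1..<m], i < k, j \<leftarrow> [1..<n], l \<leftarrow> [1..<n], j \<noteq> l]"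

definition cols_x_div_x :: "nat \<Rightarrow> nat \<Rightarrow> (nat \<Rightarrow> int) list" where
  "cols_x_div_x m n = concat [replicate (n - 1) (\<lambda>c. ex m n k c - ex m n i c).
     i \<leftarrow> [1..<m], k \<leftarrow> [1..<m], i < k]"

definition cols_y_div_yj :: "nat \<Rightarrow> nat \<Rightarrow> nat \<Rightarrow> (nat \<Rightarrow> int) list" where
  "cols_y_div_yj m n j = concat [replicate (m - 1) (\<lambda>c. ey m n l c - ey m n j c). l \<leftarrow> [1..<n], j < l]"

lemma colsA_eq:
  "colsA m n = cols_y_div_x m n @ cols_xy m n @ cols_x m n @ cols_y m n @ cols_xy_div_x m n
     @ cols_xy_div_y m n @ concat (map (cols_xy_div_xiy m n) [1..<m]) @ cols_x_div_x m n
     @ concat (map (cols_y_div_yj m n) [1..<n])"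
proof -
  have "concat (concat (map f xs)) = concat (map (\<lambda>x. concat (f x)) xs)"
    for f :: "nat \<Rightarrow> (nat \<Rightarrow> int) list list" and xs
    by (induction xs) auto
  then show ?thesis
    unfolding colsA_def cols_y_div_x_def cols_xy_def cols_x_def cols_y_def cols_xy_div_x_def
      cols_xy_div_y_def cols_xy_div_xiy_def cols_x_div_x_def cols_y_div_yj_def
    by simp
qed

lemma ex_eq:
  "i < m \<Longrightarrow> ex m n i c =
    (if c < m then (if 1 \<le> c \<and> c \<le> i then 1 else 0) else if c < m + (n - 2) then int i else 0)"
  by (auto simp: ex_def eT_def)

lemma ey_eq:
  "1 \<le> j \<Longrightarrow> j < n \<Longrightarrow> ey m n j c =
    (if c < m then 1 else if c < m + (n - 2) then int (m - 1) + (if c < m + (j - 1) then 1 else 0) else 0)"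
  by (auto simp: ey_def eT_def)

lemma colsA_nonneg: "1 \<le> m \<Longrightarrow> v \<in> set (colsA m n) \<Longrightarrow> 0 \<le> v c"
  unfolding colsA_def by (auto simp: ex_eq ey_eq split: if_splits)

text \<open>Block c belongs to coordinate c, i.e. to s_c for c < m and to t_{c-m+1} otherwise. The
  columns x_k/x_i are charged to t_{n-2}, not to s_{i+1}, where they first become positive.\<close>

definition block :: "nat \<Rightarrow> nat \<Rightarrow> nat \<Rightarrow> (nat \<Rightarrow> int) list" where
  "block m n c =
    (if c = 0 then cols_y_div_x m n @ cols_xy m n @ cols_y m n @ cols_xy_div_x m n
     else if c = 1 then cols_x m n @ cols_xy_div_y m n
     else if c < m then cols_xy_div_xiy m n (c - 1)
     else if c < m + n - 3 then cols_y_div_yj m n (c + 1 - m)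
     else cols_y_div_yj m n (n - 2) @ cols_x_div_x m n)"

definition pivot :: "nat \<Rightarrow> nat \<Rightarrow> nat \<Rightarrow> nat \<Rightarrow> int" where
  "pivot m n c =
    (if c = 0 then (\<lambda>s. ey m n 1 s - ex m n 1 s)
     else if c = 1 then ex m n 1
     else if c < m then (\<lambda>s. ex m n c s + ey m n 2 s - ex m n (c - 1) s - ey m n 1 s)
     else (\<lambda>s. ey m n (c + 2 - m) s - ey m n (c + 1 - m) s))"

lemma pivot_in_block:
  assumes "2 \<le> m" "3 \<le> n" "c < m + n - 2"
  shows "pivot m n c \<in> set (block m n c)"
proof -
  consider "c = 0" | "c = 1" | "2 \<le> c" "c < m" | "m \<le> c" "c < m + n - 3" | "c = m + n - 3"
    using assms by linarith
  then show ?thesis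
  proof cases
    case 1 then show ?thesis using assms by (force simp: block_def pivot_def cols_y_div_x_def)
  next
    case 2 then show ?thesis using assms by (force simp: block_def pivot_def cols_x_def)
  next
    case 3 then show ?thesis using assms by (force simp: block_def pivot_def cols_xy_div_xiy_def)
  next
    case 4 then show ?thesis using assms by (force simp: block_def pivot_def cols_y_div_yj_def)
  next
    case 5 then show ?thesis using assms by (force simp: block_def pivot_def cols_y_div_yj_def)
  qed
qed

lemma pivot_diag:
  assumes "2 \<le> m" "3 \<le> n" "c < m + n - 2"
  shows "pivot m n c c = 1"
  using assms by (auto simp: pivot_def ex_eq ey_eq)

lemma pivot_below_diag:
  assumes "2 \<le> m" "3 \<le> n" "c < m + n - 2" "c' < c"
  shows "pivot m n c c' = 0"
  using assms by (auto simp: pivot_def ex_eq ey_eq)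

lemma block0_cover: "1 \<le> m \<Longrightarrow> v \<in> set (block m n 0) \<Longrightarrow> v 0 = 1"
  by (auto simp: block_def cols_y_div_x_def cols_xy_def cols_y_def cols_xy_div_x_def ex_eq ey_eq)

lemma block_cover:
  assumes "2 \<le> m" "3 \<le> n" "c < m + n - 2" "v \<in> set (block m n c)"
  shows "1 \<le> v c"
proof -
  consider "c = 0" | "c = 1" | "2 \<le> c" "c < m" | "m \<le> c" "c < m + n - 3" | "c = m + n - 3"
    using assms by linarith
  then show ?thesis
  proof cases
    case 1 then show ?thesis using assms block0_cover[of m v n] by simp
  next
    case 2 then show ?thesis using assms
      by (auto simp: block_def cols_x_def cols_xy_div_y_def ex_eq ey_eq)
  next
    case 3 then show ?thesis using assms
      by (auto simp: block_def cols_xy_div_xiy_def ex_eq ey_eq)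
  next
    case 4 then show ?thesis using assms
      by (auto simp: block_def cols_y_div_yj_def ex_eq ey_eq)
  next
    case 5
    then have "block m n c = cols_y_div_yj m n (n - 2) @ cols_x_div_x m n"
      using assms(1-3) by (auto simp: block_def)
    then show ?thesis using assms 5
      by (auto simp: cols_y_div_yj_def cols_x_div_x_def ex_eq ey_eq)
  qed
qed

lemma (in comm_monoid_set) coord_split:
  fixes m n :: nat
  assumes "2 \<le> m" "3 \<le> n"
  shows "F g {..<m + n - 2} = g 0 \<^bold>* g 1 \<^bold>* F g {2..<m} \<^bold>* F g {m..<m + n - 3} \<^bold>* g (m + n - 3)"
proof -
  have "F g {..<m + n - 2} = F g {0..<m} \<^bold>* F g {m..<m + n - 2}"
    using assms atLeastLessThan_concat[of 0 m "m + n - 2" g] by (simp add: atLeast0LessThan)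
  also have "F g {0..<m} = g 0 \<^bold>* g 1 \<^bold>* F g {2..<m}"
    using assms by (simp add: atLeast_Suc_lessThan assoc numeral_2_eq_2)
  also have "F g {m..<m + n - 2} = F g {m..<m + n - 3} \<^bold>* g (m + n - 3)"
  proof -
    obtain l where "n = l + 3" using assms(2) by (metis add.commute le_iff_add)
    then show ?thesis by (simp add: atLeastLessThan_Suc)
  qed
  finally show ?thesis by (simp add: assoc)
qed

lemma mset_concat_map_upt: "mset (concat (map G [a..<b])) = (\<Sum>c\<in>{a..<b}. mset (G c))"
  by (simp add: mset_concat interv_sum_list_conv_sum_set_nat)

lemma sum_mset_blocks_s:
  assumes m: "2 \<le> m"
  shows "(\<Sum>c\<in>{2..<m}. mset (block m n c)) = (\<Sum>i\<in>{1..<m}. mset (cols_xy_div_xiy m n i))"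
proof -
  have "(\<Sum>c\<in>{2..<m}. mset (block m n c))
      = (\<Sum>c\<in>{1 + 1..<(m - 1) + 1}. mset (cols_xy_div_xiy m n (c - 1)))"
    using m by (intro sum.cong) (auto simp: block_def)
  also have "\<dots> = (\<Sum>i\<in>{1..<m - 1}. mset (cols_xy_div_xiy m n i))"
    by (simp only: sum.shift_bounds_nat_ivl) simp
  also have "\<dots> = (\<Sum>i\<in>{1..<m}. mset (cols_xy_div_xiy m n i))"
  proof -
    have "cols_xy_div_xiy m n (m - 1) = []" by (auto simp: cols_xy_div_xiy_def)
    then show ?thesis
      using m sum.atLeastLessThan_Suc[of 1 "m - 1" "\<lambda>i. mset (cols_xy_div_xiy m n i)"] by simp
  qed
  finally show ?thesis .
qed

lemma sum_mset_blocks_t: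
  assumes m: "2 \<le> m" and n: "3 \<le> n"
  shows "(\<Sum>c\<in>{m..<m + n - 3}. mset (block m n c)) + mset (cols_y_div_yj m n (n - 2))
    = (\<Sum>j\<in>{1..<n}. mset (cols_y_div_yj m n j))"
proof -
  obtain l where l: "n = Suc (Suc (Suc l))" using le_Suc_ex[OF n] by (auto simp: numeral_3_eq_3)
  have "(\<Sum>c\<in>{m..<m + n - 3}. mset (block m n c))
      = (\<Sum>c\<in>{1 + (m - 1)..<(n - 2) + (m - 1)}. mset (cols_y_div_yj m n (c + 1 - m)))"
    using m n by (intro sum.cong) (auto simp: block_def)
  also have "\<dots> = (\<Sum>j\<in>{1..<n - 2}. mset (cols_y_div_yj m n j))"
    using m by (simp only: sum.shift_bounds_nat_ivl) simp
  also have "\<dots> + mset (cols_y_div_yj m n (n - 2)) + mset (cols_y_div_yj m n (n - 1))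
      = (\<Sum>j\<in>{1..<n}. mset (cols_y_div_yj m n j))"
    using l by (simp add: add.assoc)
  moreover have "cols_y_div_yj m n (n - 1) = []" by (auto simp: cols_y_div_yj_def)
  ultimately show ?thesis by simp
qed

lemma mset_colsA_blocks:
  assumes m: "2 \<le> m" and n: "3 \<le> n"
  shows "mset (colsA m n) = mset (concat (map (block m n) [0..<m + n - 2]))"
proof -
  have colsA_mset: "mset (colsA m n) = mset (cols_y_div_x m n) + mset (cols_xy m n)
      + mset (cols_x m n) + mset (cols_y m n) + mset (cols_xy_div_x m n) + mset (cols_xy_div_y m n)
      + (\<Sum>i\<in>{1..<m}. mset (cols_xy_div_xiy m n i)) + mset (cols_x_div_x m n)
      + (\<Sum>j\<in>{1..<n}. mset (cols_y_div_yj m n j))"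
    by (simp add: colsA_eq mset_concat_map_upt)
  have block_last: "block m n (m + n - 3) = cols_y_div_yj m n (n - 2) @ cols_x_div_x m n"
    using m n by (auto simp: block_def)
  have "mset (concat (map (block m n) [0..<m + n - 2])) = (\<Sum>c<m + n - 2. mset (block m n c))"
    by (simp add: mset_concat_map_upt atLeast0LessThan)
  also have "\<dots> = mset (colsA m n)"
    unfolding sum.coord_split[OF m n] colsA_mset sum_mset_blocks_s[OF m, symmetric]
      sum_mset_blocks_t[OF m n, symmetric] block_last
    using m by (simp add: block_def ac_simps)
  finally show ?thesis ..
qed

lemma partition_tail_sum_le:
  assumes "partition_len p N L"
  shows "(\<Sum>i=1..L-1. p (i + 1)) \<le> N"
proof (cases L)
  case (Suc L')
  have "(\<Sum>i=1..L-1. p (i + 1)) = (\<Sum>i=2..L. p i)"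
    using Suc sum.shift_bounds_cl_nat_ivl[of p 1 1 L'] by (simp add: numeral_2_eq_2)
  also have "\<dots> \<le> (\<Sum>i=1..L. p i)" by (intro sum_mono2) auto
  finally show ?thesis using assms by (simp add: partition_len_def)
qed simp

text \<open>The lambda-part of b is simply dropped.\<close>

lemma bvec_le:
  assumes "\<And>i. 1 \<le> i \<Longrightarrow> i \<le> m - 1 \<Longrightarrow> ex m n i c \<le> \<alpha>"
    and "\<And>j. 1 \<le> j \<Longrightarrow> j \<le> n - 1 \<Longrightarrow> ey m n j c \<le> \<beta>"
  shows "bvec m n lam mu nu c \<le> \<alpha> * int (\<Sum>i=1..m-1. mu (i + 1)) + \<beta> * int (\<Sum>j=1..n-1. nu (j + 1))"
proof -
  have "0 \<le> (\<Sum>k=1..m*n. int (lam k) * ez m n k c)"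
    by (intro sum_nonneg mult_nonneg_nonneg) (auto simp: ez_def ex_def ey_def eT_def)
  moreover have "(\<Sum>i=1..m-1. int (mu (i + 1)) * ex m n i c) \<le> (\<Sum>i=1..m-1. int (mu (i + 1)) * \<alpha>)"
    by (intro sum_mono mult_left_mono) (auto simp: assms(1))
  moreover have "(\<Sum>j=1..n-1. int (nu (j + 1)) * ey m n j c) \<le> (\<Sum>j=1..n-1. int (nu (j + 1)) * \<beta>)"
    by (intro sum_mono mult_left_mono) (auto simp: assms(2))
  ultimately show ?thesis
    unfolding bvec_def by (simp add: sum_distrib_left sum_distrib_right mult.commute)
qed

definition coord_bound :: "nat \<Rightarrow> nat \<Rightarrow> nat \<Rightarrow> nat" where
  "coord_bound m N c = (if c = 0 then N else if c < m then 2 * N else (2 * m - 1) * N)"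

lemma bvec_le_coord_bound:
  assumes m: "1 \<le> m" and mu: "partition_len mu N m" and nu: "partition_len nu N n"
    and c: "c < m + (n - 2)"
  shows "bvec m n lam mu nu c \<le> int (coord_bound m N c)"
proof -
  have mu_le: "int (\<Sum>i=1..m-1. mu (i + 1)) \<le> int N"
    by (rule of_nat_mono[OF partition_tail_sum_le[OF mu]])
  have nu_le: "int (\<Sum>j=1..n-1. nu (j + 1)) \<le> int N"
    by (rule of_nat_mono[OF partition_tail_sum_le[OF nu]])
  consider "c = 0" | "1 \<le> c" "c < m" | "m \<le> c" by linarith
  then show ?thesis
  proof cases
    case 1
    have "bvec m n lam mu nu c \<le> 0 * int (\<Sum>i=1..m-1. mu (i + 1)) + 1 * int (\<Sum>j=1..n-1. nu (j + 1))"
      by (rule bvec_le) (use 1 m in \<open>auto simp: ex_def ey_def eT_def\<close>)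
    then show ?thesis using 1 nu_le by (simp add: coord_bound_def)
  next
    case 2
    have "bvec m n lam mu nu c \<le> 1 * int (\<Sum>i=1..m-1. mu (i + 1)) + 1 * int (\<Sum>j=1..n-1. nu (j + 1))"
      by (rule bvec_le) (use 2 in \<open>auto simp: ex_def ey_def eT_def\<close>)
    then show ?thesis using 2 mu_le nu_le by (simp add: coord_bound_def)
  next
    case 3
    have "bvec m n lam mu nu c \<le> int (m - 1) * int (\<Sum>i=1..m-1. mu (i + 1)) + int m * int (\<Sum>j=1..n-1. nu (j + 1))"
      by (rule bvec_le) (use 3 c m in \<open>auto simp: ex_eq ey_eq\<close>)
    also have "\<dots> \<le> int (m - 1) * int N + int m * int N"
      using mu_le nu_le by (intro add_mono mult_left_mono) auto
    also have "\<dots> = int ((2 * m - 1) * N)" using m by (simp add: algebra_simps of_nat_diff)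
    finally show ?thesis using 3 m by (simp add: coord_bound_def)
  qed
qed

lemma sum_upt_if_neq:
  "1 \<le> i \<Longrightarrow> i < m \<Longrightarrow> (\<Sum>k=Suc 0..<m. if i \<noteq> k then c else 0) = (m - 2) * (c :: nat)"
proof -
  assume i: "1 \<le> i" "i < m"
  have "{Suc 0..<m} \<inter> {k. i \<noteq> k} = {1..<m} - {i}" by auto
  then show ?thesis using i by (simp add: sum.If_cases numeral_2_eq_2)
qed

lemma sum_upt_if_less: "(\<Sum>k=Suc 0..<m. if i < k then c else 0) = (m - 1 - i) * (c :: nat)"
proof -
  have "{Suc 0..<m} \<inter> {k. i < k} = {i + 1..<m}" by auto
  then show ?thesis by (simp add: sum.If_cases)
qed

lemma sum_upt_pred_diff: "(\<Sum>i\<in>{1..<m}. m - 1 - i) = (m - 1) choose 2"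
proof (induction m)
  case (Suc m)
  show ?case
  proof (cases m)
    case (Suc k)
    have "(\<Sum>i\<in>{1..<Suc m}. Suc m - 1 - i) = (\<Sum>i\<in>{1..<m}. (m - 1 - i) + 1)"
      using Suc by (auto simp: atLeastLessThanSuc intro!: sum.cong)
    also have "\<dots> = ((m - 1) choose 2) + (m - 1)"
      using Suc.IH by (simp only: sum.distrib) simp
    also have "\<dots> = (Suc m - 1) choose 2"
      using Suc by (simp add: numeral_2_eq_2)
    finally show ?thesis .
  qed simp
qed simp

lemma sum_list_map_concat: "sum_list (map f (concat xss)) = sum_list (map (\<lambda>xs. sum_list (map f xs)) xss)"
  by (induction xss) auto

lemmas length_simps = length_concat map_map comp_def interv_sum_list_conv_sum_set_nat
  sum_list_map_concat if_distrib[of length] if_distrib[of sum_list] if_distrib[of "map _"]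

lemma length_cols:
  "length (cols_y_div_x m n) = (m - 1) * (n - 1)"
  "length (cols_xy m n) = (m - 1) * (n - 1)"
  "length (cols_x m n) = (m - 1) * (n - 1)"
  "length (cols_y m n) = (m - 1) * (n - 1)"
  "length (cols_xy_div_x m n) = (m - 1) * (m - 2) * (n - 1)"
  "length (cols_xy_div_y m n) = (m - 1) * (n - 1) * (n - 2)"
  "length (cols_xy_div_xiy m n i) = (m - 1 - i) * ((n - 1) * (n - 2))"
  "length (cols_y_div_yj m n j) = (n - 1 - j) * (m - 1)"
  unfolding cols_y_div_x_def cols_xy_def cols_x_def cols_y_def cols_xy_div_x_def cols_xy_div_y_def
    cols_xy_div_xiy_def cols_y_div_yj_def
  by (simp_all add: length_simps sum_upt_if_neq sum_upt_if_less cong: sum.cong_simp if_cong)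

lemma length_cols_x_div_x: "length (cols_x_div_x m n) = (n - 1) * ((m - 1) choose 2)"
proof -
  have "length (cols_x_div_x m n) = (\<Sum>i\<in>{1..<m}. (m - 1 - i) * (n - 1))"
    unfolding cols_x_div_x_def
    by (simp add: length_simps sum_upt_if_less cong: sum.cong_simp if_cong)
  also have "\<dots> = (n - 1) * ((m - 1) choose 2)"
    using sum_upt_pred_diff[of m] by (simp add: sum_distrib_right[symmetric] mult.commute)
  finally show ?thesis .
qed

lemma length_block0:
  assumes "2 \<le> m"
  shows "length (block m n 0) = (m^2 - 1) * (n - 1)"
proof -
  obtain k where k: "m = k + 2" using assms by (metis add.commute le_iff_add)
  then show ?thesis by (cases n) (simp_all add: block_def length_cols power2_eq_square algebra_simps)
qed

lemma length_block:
  assumes m: "2 \<le> m" and n: "3 \<le> n"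
  shows "length (block m n 1) = (m - 1) * (n - 1)^2"
    and "2 \<le> c \<Longrightarrow> c < m \<Longrightarrow> length (block m n c) = 2 * ((n - 1) choose 2) * (m - c)"
    and "m \<le> c \<Longrightarrow> c < m + n - 3 \<Longrightarrow> length (block m n c) = (m + n - 2 - c) * (m - 1)"
    and "length (block m n (m + n - 3)) = ((m - 1) choose 2) * (n - 1) + (m - 1)"
proof -
  obtain k l where k: "m = k + 2" and l: "n = l + 3"
    using m n by (metis add.commute le_iff_add)
  have two_choose: "2 * ((n - 1) choose 2) = (n - 1) * (n - 2)"
    using l by (simp add: choose_two)
  show "length (block m n 1) = (m - 1) * (n - 1)^2"
    unfolding k l by (simp add: block_def length_cols power2_eq_square algebra_simps)
  show "length (block m n c) = 2 * ((n - 1) choose 2) * (m - c)" if "2 \<le> c" "c < m"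
    using that two_choose by (simp add: block_def length_cols)
  show "length (block m n c) = (m + n - 2 - c) * (m - 1)" if "m \<le> c" "c < m + n - 3"
    using that m by (simp add: block_def length_cols)
  show "length (block m n (m + n - 3)) = ((m - 1) choose 2) * (n - 1) + (m - 1)"
    using m n by (auto simp: block_def length_cols length_cols_x_div_x mult.commute)
qed

definition gtilde_bound :: "nat \<Rightarrow> nat \<Rightarrow> nat \<Rightarrow> nat" where
  "gtilde_bound m n N =
     ((N + ((m^2 - 1) * (n - 1) - 1)) choose N)
   * ((2*N + ((m - 1) * (n - 1)^2 - 1)) choose (2*N))
   * (((2*m - 1)*N + (((m - 1) choose 2) * (n - 1) + (m - 1) - 1)) choose ((2*m - 1)*N))
   * (\<Prod>i=3..m. (2*N + (2 * ((n - 1) choose 2) * (i - 2) - 1)) choose (2*N))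
   * (\<Prod>j=1..n-3. ((2*m - 1)*N + ((n - j - 1) * (m - 1) - 1)) choose ((2*m - 1)*N))"

lemma prod_blocks_eq_gtilde_bound:
  assumes m: "2 \<le> m" and n: "3 \<le> n"
  shows "(\<Prod>c<m + n - 2. (coord_bound m N c + (length (block m n c) - 1)) choose coord_bound m N c)
    = gtilde_bound m n N"
proof -
  define f where "f c = (coord_bound m N c + (length (block m n c) - 1)) choose coord_bound m N c" for c
  have f_x: "(\<Prod>c\<in>{2..<m}. f c) = (\<Prod>i=3..m. (2*N + (2 * ((n - 1) choose 2) * (i - 2) - 1)) choose (2*N))"
  proof -
    have "(\<Prod>c\<in>{2..<m}. f c) = (\<Prod>i\<in>{Suc 2..m}. f (m + 2 - i))"
      by (rule prod.atLeastLessThan_rev_at_least_Suc_atMost)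
    also have "\<dots> = (\<Prod>i=3..m. (2*N + (2 * ((n - 1) choose 2) * (i - 2) - 1)) choose (2*N))"
      by (rule prod.cong) (use m n in \<open>auto simp: f_def coord_bound_def length_block(2)\<close>)
    finally show ?thesis .
  qed
  have f_y: "(\<Prod>c\<in>{m..<m + n - 3}. f c)
      = (\<Prod>j=1..n-3. ((2*m - 1)*N + ((n - j - 1) * (m - 1) - 1)) choose ((2*m - 1)*N))"
  proof -
    have "{m..<m + n - 3} = {1 + (m - 1)..<(n - 2) + (m - 1)}" and "{1..<n - 2} = {1..n - 3}"
      using m n by auto
    then have "(\<Prod>c\<in>{m..<m + n - 3}. f c) = (\<Prod>j=1..n-3. f (j + (m - 1)))"
      by (simp only: prod.shift_bounds_nat_ivl)
    also have "\<dots> = (\<Prod>j=1..n-3. ((2*m - 1)*N + ((n - j - 1) * (m - 1) - 1)) choose ((2*m - 1)*N))"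
      by (rule prod.cong) (use m n in \<open>auto simp: f_def coord_bound_def length_block(3)\<close>)
    finally show ?thesis .
  qed
  have f_0: "f 0 = (N + ((m^2 - 1) * (n - 1) - 1)) choose N"
    using length_block0[OF m] by (simp add: f_def coord_bound_def)
  have f_1: "f 1 = (2*N + ((m - 1) * (n - 1)^2 - 1)) choose (2*N)"
    using length_block(1)[OF m n] m by (simp add: f_def coord_bound_def)
  have f_last: "f (m + n - 3)
      = ((2*m - 1)*N + (((m - 1) choose 2) * (n - 1) + (m - 1) - 1)) choose ((2*m - 1)*N)"
  proof -
    have "\<not> m + n - 3 < m" "m + n - 3 \<noteq> 0" using m n by linarith+
    then show ?thesis using length_block(4)[OF m n] m by (simp add: f_def coord_bound_def)
  qed
  have "(\<Prod>c<m + n - 2. f c) = gtilde_bound m n N"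
    unfolding prod.coord_split[OF m n] f_0 f_1 f_x f_y f_last gtilde_bound_def by (simp only: ac_simps)
  then show ?thesis by (simp add: f_def)
qed

lemma gtilde_le_gtilde_bound_n_ge_3:
  assumes m: "2 \<le> m" and n: "3 \<le> n" and mu: "partition_len mu N m" and nu: "partition_len nu N n"
  shows "gtilde m n lam mu nu \<le> gtilde_bound m n N"
proof -
  have "gtilde m n lam mu nu
      \<le> (\<Prod>c<m + n - 2. (coord_bound m N c + (length (block m n c) - 1)) choose coord_bound m N c)"
    unfolding gtilde_def
  proof (rule vpf_le_prod_choose[where D = "pivot m n" and P = "\<lambda>c. c" and C = "\<lambda>c. {c}"])
    show "mset (colsA m n) = mset (concat (map (block m n) [0..<m + n - 2]))"
      by (rule mset_colsA_blocks[OF m n])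
    show "0 \<le> v c" if "v \<in> set (colsA m n)" for v c
      using colsA_nonneg[OF _ that] m by simp
    show "pivot m n c \<in> set (block m n c)" if "c < m + n - 2" for c
      by (rule pivot_in_block[OF m n that])
    show "pivot m n c c \<noteq> 0" if "c < m + n - 2" for c
      using pivot_diag[OF m n that] by simp
    show "pivot m n h g = 0" if "g < h" "h < m + n - 2" for g h
      by (rule pivot_below_diag[OF m n that(2,1)])
    show "1 \<le> (\<Sum>c'\<in>{c}. v c')" if "c < m + n - 2" "v \<in> set (block m n c)" for c v
      using block_cover[OF m n that] by simp
    show "(\<Sum>c'\<in>{c}. bvec m n lam mu nu c') \<le> int (coord_bound m N c)" if "c < m + n - 2" for c
      using bvec_le_coord_bound[OF _ mu nu, of c lam] m n that by simp
  qed
  also have "\<dots> = gtilde_bound m n N"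
    by (rule prod_blocks_eq_gtilde_bound[OF m n])
  finally show ?thesis .
qed

lemma one_le_choose_add: "1 \<le> (a + c) choose a"
  by (simp add: Suc_leI)

lemma one_le_gtilde_bound: "1 \<le> gtilde_bound m n N"
  unfolding gtilde_bound_def by (auto simp: Suc_le_eq zero_less_binomial_iff intro!: prod_pos)

lemma choose_add_mono:
  assumes "a \<le> a'"
  shows "(a + c) choose a \<le> (a' + c) choose a'"
proof -
  have "(a + c) choose a = (a + c) choose c" "(a' + c) choose a' = (a' + c) choose c"
    using binomial_symmetric[of a "a + c"] binomial_symmetric[of a' "a' + c"] by simp_all
  then show ?thesis using assms by (simp add: binomial_right_mono)
qed

lemma mset_colsA_n_eq_2: "mset (colsA m 2) = mset (block m 2 0 @ cols_x m 2 @ cols_x_div_x m 2)"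
proof -
  have empty: "cols_xy_div_y m 2 = []" "concat (map (cols_xy_div_xiy m 2) [1..<m]) = []"
    "concat (map (cols_y_div_yj m 2) [1..<2]) = []"
    by (auto simp: cols_xy_div_y_def cols_xy_div_xiy_def cols_y_div_yj_def numeral_2_eq_2)
  show ?thesis
    unfolding colsA_eq empty by (simp add: block_def ac_simps)
qed

lemma cols_x_x_div_x_cover:
  assumes "v \<in> set (cols_x m n @ cols_x_div_x m n)"
  obtains c where "c \<in> {1..<m}" "1 \<le> v c"
proof -
  consider i where "1 \<le> i" "i < m" "v = ex m n i"
    | i k where "1 \<le> i" "i < k" "k < m" "v = (\<lambda>c. ex m n k c - ex m n i c)"
    using assms by (auto simp: cols_x_def cols_x_div_x_def)
  then show ?thesis
  proof cases
    case (1 i)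
    then show ?thesis using that[of i] by (simp add: ex_eq)
  next
    case (2 i k)
    then show ?thesis using that[of k] by (simp add: ex_eq)
  qed
qed

lemma prod_blocks_n_eq_2_le:
  assumes m: "2 \<le> m"
  shows "((N + (length (block m 2 0) - 1)) choose N)
    * ((2 * (m - 1) * N + (length (cols_x m 2 @ cols_x_div_x m 2) - 1)) choose (2 * (m - 1) * N))
    \<le> gtilde_bound m 2 N"
proof -
  let ?F2 = "(2*N + ((m - 1) * (2 - 1)^2 - 1)) choose (2*N)"
  let ?F3 = "((2*m - 1)*N + (((m - 1) choose 2) * (2 - 1) + (m - 1) - 1)) choose ((2*m - 1)*N)"
  let ?P1 = "\<Prod>i=3..m. (2*N + (2 * ((2 - 1) choose 2) * (i - 2) - 1)) choose (2*N)"
  let ?P2 = "\<Prod>j=1..2-3. ((2*m - 1)*N + ((2 - j - 1) * (m - 1) - 1)) choose ((2*m - 1)*N)"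
  have len: "length (cols_x m 2 @ cols_x_div_x m 2) - 1 = ((m - 1) choose 2) * (2 - 1) + (m - 1) - 1"
    using m by (simp add: length_cols length_cols_x_div_x)
  have "(2 * (m - 1) * N + (length (cols_x m 2 @ cols_x_div_x m 2) - 1)) choose (2 * (m - 1) * N)
      \<le> ?F3"
    unfolding len by (intro choose_add_mono mult_le_mono1) linarith
  also have "1 * (?F3 * (1 * 1)) \<le> ?F2 * (?F3 * (?P1 * ?P2))"
    by (intro mult_le_mono le_refl one_le_choose_add prod_ge_1)
  finally have "(2 * (m - 1) * N + (length (cols_x m 2 @ cols_x_div_x m 2) - 1)) choose (2 * (m - 1) * N)
      \<le> ?F2 * (?F3 * (?P1 * ?P2))" by simp
  then show ?thesis
    unfolding gtilde_bound_def length_block0[OF m] mult.assoc by (rule mult_le_mono2)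
qed

lemma gtilde_le_gtilde_bound_n_eq_2:
  assumes m: "2 \<le> m" and mu: "partition_len mu N m" and nu: "partition_len nu N 2"
  shows "gtilde m 2 lam mu nu \<le> gtilde_bound m 2 N"
proof -
  define G where "G c = (if c = 0 then block m 2 0 else cols_x m 2 @ cols_x_div_x m 2)" for c :: nat
  define C where "C c = (if c = 0 then {0} else {1..<m})" for c :: nat
  define B where "B c = (if c = 0 then N else 2 * (m - 1) * N)" for c :: nat
  have nonneg: "0 \<le> v c" if "v \<in> set (colsA m 2)" for v c
    using colsA_nonneg[OF _ that] m by simp
  have "gtilde m 2 lam mu nu \<le> (\<Prod>c<2. (B c + (length (G c) - 1)) choose B c)"
    unfolding gtilde_def
  proof (rule vpf_le_prod_choose[where D = "pivot m 2" and P = "\<lambda>c. c"])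
    show "mset (colsA m 2) = mset (concat (map G [0..<2]))"
      unfolding mset_colsA_n_eq_2 by (simp add: G_def numeral_2_eq_2)
    show "pivot m 2 g \<in> set (G g)" if "g < 2" for g
      using that m by (force simp: G_def block_def pivot_def cols_y_div_x_def cols_x_def less_2_cases_iff)
    show "pivot m 2 g g \<noteq> 0" if "g < 2" for g
      using that m by (auto simp: pivot_def ex_eq ey_eq less_2_cases_iff)
    show "pivot m 2 h g = 0" if "g < h" "h < 2" for g h
      using that m by (auto simp: pivot_def ex_eq)
    show "1 \<le> (\<Sum>c\<in>C g. v c)" if "g < 2" "v \<in> set (G g)" for g v
    proof (cases "g = 0")
      case True
      then show ?thesis using that block0_cover[of m v 2] m by (simp add: G_def C_def)
    next
      case False
      then have v: "v \<in> set (cols_x m 2 @ cols_x_div_x m 2)" using that by (simp add: G_def)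
      then obtain c where c: "c \<in> {1..<m}" "1 \<le> v c" by (rule cols_x_x_div_x_cover)
      have "v \<in> set (colsA m 2)" using v by (auto simp: colsA_eq)
      then have "v c \<le> (\<Sum>c\<in>{1..<m}. v c)"
        using c(1) nonneg by (intro member_le_sum) auto
      then show ?thesis using False c(2) by (simp add: C_def)
    qed
    show "(\<Sum>c\<in>C g. bvec m 2 lam mu nu c) \<le> int (B g)" if "g < 2" for g
    proof -
      have bvec_le: "bvec m 2 lam mu nu c \<le> int (if c = 0 then N else 2 * N)" if "c < m" for c
        using bvec_le_coord_bound[OF _ mu nu, of c lam] m that
        by (auto simp: coord_bound_def split: if_split_asm)
      have "(\<Sum>c\<in>{1..<m}. bvec m 2 lam mu nu c) \<le> (\<Sum>c\<in>{1..<m}. int (2 * N))"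
      proof (rule sum_mono)
        fix c assume "c \<in> {1..<m}"
        then show "bvec m 2 lam mu nu c \<le> int (2 * N)" using bvec_le[of c] by simp
      qed
      also have "\<dots> = int (2 * (m - 1) * N)" by simp
      finally show ?thesis using \<open>g < 2\<close> bvec_le[of 0] m by (auto simp: C_def B_def less_2_cases_iff)
    qed
  qed (use nonneg in simp)
  also have "\<dots> \<le> gtilde_bound m 2 N"
    using prod_blocks_n_eq_2_le[OF m, of N] by (simp add: numeral_2_eq_2 G_def B_def)
  finally show ?thesis .
qed

lemma gtilde_degenerate_le_1:
  assumes "m = 1 \<or> n = 1"
  shows "gtilde m n lam mu nu \<le> 1"
proof -
  have "colsA m n = []" using assms by (auto simp: colsA_def)
  then show ?thesis
    using triangular_solutions_card[of "[]"] by (simp add: gtilde_def vpf_eq_card_solutions)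
qed

theorem mainTheorem8:
  fixes m n N :: nat and lam mu nu :: "nat \<Rightarrow> nat"
  assumes "m \<ge> 1" and "n \<ge> 1"
    and "partition_len lam N (m * n)"
    and "partition_len mu N m"
    and "partition_len nu N n"
  shows "gtilde m n lam mu nu \<le>
     ((N + ((m^2 - 1) * (n - 1) - 1)) choose N)
   * ((2*N + ((m - 1) * (n - 1)^2 - 1)) choose (2*N))
   * (((2*m - 1)*N + (((m - 1) choose 2) * (n - 1) + (m - 1) - 1)) choose ((2*m - 1)*N))
   * (\<Prod>i=3..m. (2*N + (2 * ((n - 1) choose 2) * (i - 2) - 1)) choose (2*N))
   * (\<Prod>j=1..n-3. ((2*m - 1)*N + ((n - j - 1) * (m - 1) - 1)) choose ((2*m - 1)*N))"
proof -
  consider "m = 1 \<or> n = 1" | "2 \<le> m" "n = 2" | "2 \<le> m" "3 \<le> n"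
    using assms(1,2) by linarith
  then have "gtilde m n lam mu nu \<le> gtilde_bound m n N"
  proof cases
    case 1
    show ?thesis using gtilde_degenerate_le_1[OF 1] one_le_gtilde_bound by (rule order_trans)
  next
    case 2
    then show ?thesis using gtilde_le_gtilde_bound_n_eq_2[OF 2(1) assms(4)] assms(5) by simp
  next
    case 3
    show ?thesis by (rule gtilde_le_gtilde_bound_n_ge_3[OF 3 assms(4,5)])
  qed
  then show ?thesis unfolding gtilde_bound_def .
qed

end
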